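(* Let $\mu_1,\mu_2\in\mathbb{R}$ with $\mu_1+\mu_2>0$ or $\mu_1=\mu_2=0$, and let $f_1\in\mathcal{F}_{\mu_1,L_1}$, $f_2\in\mathcal{F}_{\mu_2,L_2}$ where exactly one of $L_1,L_2$ equals $\infty$ and the other is finite, with $\mu_1<L_1$, $\mu_2<L_2$, and $F=f_1-f_2$ bounded below, $F^*:=\inf F$. Run $N\ge1$ DCA iterations from $x^0$ producing $x^1,\dots,x^N$, with selected $g_2^k\in\partial f_2(x^k)$ for $0\le k\le N-1$, $g_1^k:=g_2^{k-1}\in\partial f_1(x^k)$ for $1\le k\le N$, and arbitrary $g_1^0\in\partial f_1(x^0)$, $g_2^N\in\partial f_2(x^N)$. Consider the following regimes (with $\sigma,\sigma^+\ge0$ and $p=\sigma+\sigma^+$): ($p_{1,7}$) $L_1=\infty>L_2>\mu_1\ge0$ and either $\mu_2\ge0$ or [$\mu_2<0$ and $\mu_1^{-1}+\mu_2^{-1}+L_2^{-1}\le0$]: $\sigma=0$, $\sigma^+=\frac{L_2+\mu_1}{L_2^2}$. ($p_{2,8}$) $L_2=\infty>L_1>\mu_2\ge0$ and either $\mu_1\ge0$ or [$\mu_1<0$ and $\mu_1^{-1}+\mu_2^{-1}+L_1^{-1}\le0$]: $\sigma=\frac{L_1+\mu_2}{L_1^2}$, $\sigma^+=0$. ($p_3$) $L_2=\infty$, $\mu_1>-\mu_2>0$: $\sigma=\frac{L_1^{-1}(\mu_1^{-1}+\mu_2^{-1})}{\mu_1^{-1}+\mu_2^{-1}-L_1^{-1}}$,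 $\sigma^+=0$. ($p_4$) $L_1=\infty$, $\mu_2>-\mu_1>0$: $\sigma=0$, $\sigma^+=\frac{L_2^{-1}(\mu_1^{-1}+\mu_2^{-1})}{\mu_1^{-1}+\mu_2^{-1}-L_2^{-1}}$. ($p_5$) $L_1=\infty$, $\mu_1>-\mu_2>0$, $0<\mu_1^{-1}+\mu_2^{-1}+L_2^{-1}$: $\sigma=0$, $\sigma^+=\frac{\mu_1+\mu_2}{\mu_2^2}$. ($p_6$) $L_2=\infty$, $\mu_2>-\mu_1>0$, $0<\mu_1^{-1}+\mu_2^{-1}+L_1^{-1}$: $\sigma=\frac{\mu_1+\mu_2}{\mu_1^2}$, $\sigma^+=0$. If the parameters fall in one of these regimes and the corresponding $p>0$, then the one-step bound $F(x)-F(x^+)\ge\frac{\sigma}{2}\|g_1-g_2\|^2+\frac{\sigma^+}{2}\|g_1^+-g_2^+\|^2$ holds for every DCA step (with $g_1^+=g_2$ the selected subgradient, $g_1\in\partial f_1(x)$, $g_2^+\in\partial f_2(x^+)$ arbitrary), and $$\frac12\min_{0\le k\le N}\|g_1^k-g_2^k\|^2\le\frac{F(x^0)-F(x^N)}{pN};$$ if moreover $L_1>\mu_2$, then $\frac12\min_{0\le k\le N}\|g_1^k-g_2^k\|^2\le\frac{F(x^0)-F^*}{pN+\frac{1}{L_1-\mu_2}}$, where $\frac{1}{L_1-\mu_2}=0$ if $L_1=\infty$.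
   Context: For $L\in(0,\infty]$ and $\mu<L$, $\mathcal{F}_{\mu,L}=\mathcal{F}_{\mu,L}(\mathbb{R}^d)$ denotes the class of proper lower semicontinuous functions $f:\mathbb{R}^d\to\mathbb{R}$ such that $f-\frac{\mu}{2}\|\cdot\|^2$ is convex and, if $L<\infty$, also $\frac{L}{2}\|\cdot\|^2-f$ is convex (for $L=\infty$ only the first condition is imposed). Subdifferential: for convex $f$, $\partial f(x)=\{g:\ f(y)\ge f(x)+\langle g,y-x\rangle\ \forall y\}$; for $f\in\mathcal{F}_{\mu,L}$ with $\mu<0$, $\partial f(x):=\{g-\mu x:\ g\in\partial\tilde f(x)\}$ where $\tilde f=f-\frac{\mu}{2}\|\cdot\|^2$ is convex. One DCA iteration from $x$: select $g_2\in\partial f_2(x)$, then select $x^+\in\arg\min_{w\in\mathbb{R}^d}\{f_1(w)-\langle g_2,w\rangle\}$ (assumed to exist); the optimality condition gives $g_2\in\partial f_1(x^+)$. *)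

theory Defs
  imports "HOL-Analysis.Analysis" "HOL-Library.Extended_Real"
begin

definition lsc_fun :: "('a::topological_space \<Rightarrow> real) \<Rightarrow> bool" where
  "lsc_fun f \<longleftrightarrow> (\<forall>x. \<forall>e>0. \<forall>\<^sub>F y in at x. f x - e < f y)"

text \<open>The class F_{mu,L}; L = PInfty encodes L = infinity.\<close>
definition fclass :: "real \<Rightarrow> ereal \<Rightarrow> ('a::euclidean_space \<Rightarrow> real) \<Rightarrow> bool" where
  "fclass \<mu> L f \<longleftrightarrow> lsc_fun f
     \<and> convex_on UNIV (\<lambda>x. f x - \<mu> / 2 * (norm x)\<^sup>2)
     \<and> (L \<noteq> PInfty \<longrightarrow> convex_on UNIV (\<lambda>x. real_of_ereal L / 2 * (norm x)\<^sup>2 - f x))"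

definition csubdiff :: "('a::real_inner \<Rightarrow> real) \<Rightarrow> 'a \<Rightarrow> 'a set" where
  "csubdiff f x = {g. \<forall>y. f y \<ge> f x + inner g (y - x)}"

text \<open>Subdifferential of f in F_{mu,L}: the convex one if mu >= 0 (f convex), otherwise via
  the convex function f - mu/2 |.|^2.\<close>
definition subdiff :: "real \<Rightarrow> ('a::real_inner \<Rightarrow> real) \<Rightarrow> 'a \<Rightarrow> 'a set" where
  "subdiff \<mu> f x = (if \<mu> \<ge> 0 then csubdiff f x
      else {g + \<mu> *\<^sub>R x | g. g \<in> csubdiff (\<lambda>y. f y - \<mu> / 2 * (norm y)\<^sup>2) x})"

definition dca_argmin :: "('a::real_inner \<Rightarrow> real) \<Rightarrow> 'a \<Rightarrow> 'a \<Rightarrow> bool" where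
  "dca_argmin f1 g2 x' \<longleftrightarrow> (\<forall>w. f1 x' - inner g2 x' \<le> f1 w - inner g2 w)"

definition dca_regime :: "real \<Rightarrow> real \<Rightarrow> ereal \<Rightarrow> ereal \<Rightarrow> real \<Rightarrow> real \<Rightarrow> bool" where
  "dca_regime \<mu>1 \<mu>2 L1 L2 \<sigma> \<sigma>p \<longleftrightarrow>
    (let l1 = real_of_ereal L1; l2 = real_of_ereal L2 in
     \<comment> \<open>p_{1,7}\<close>
     (L1 = PInfty \<and> L2 \<noteq> PInfty \<and> l2 > \<mu>1 \<and> \<mu>1 \<ge> 0 \<and>
       (\<mu>2 \<ge> 0 \<or> (\<mu>2 < 0 \<and> 1/\<mu>1 + 1/\<mu>2 + 1/l2 \<le> 0)) \<and>
       \<sigma> = 0 \<and> \<sigma>p = (l2 + \<mu>1) / l2\<^sup>2)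
   \<or> \<comment> \<open>p_{2,8}\<close>
     (L2 = PInfty \<and> L1 \<noteq> PInfty \<and> l1 > \<mu>2 \<and> \<mu>2 \<ge> 0 \<and>
       (\<mu>1 \<ge> 0 \<or> (\<mu>1 < 0 \<and> 1/\<mu>1 + 1/\<mu>2 + 1/l1 \<le> 0)) \<and>
       \<sigma> = (l1 + \<mu>2) / l1\<^sup>2 \<and> \<sigma>p = 0)
   \<or> \<comment> \<open>p_3\<close>
     (L2 = PInfty \<and> \<mu>1 > - \<mu>2 \<and> - \<mu>2 > 0 \<and>
       \<sigma> = ((1/l1) * (1/\<mu>1 + 1/\<mu>2)) / (1/\<mu>1 + 1/\<mu>2 - 1/l1) \<and> \<sigma>p = 0)
   \<or> \<comment> \<open>p_4\<close>
     (L1 = PInfty \<and> \<mu>2 > - \<mu>1 \<and> - \<mu>1 > 0 \<and>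
       \<sigma> = 0 \<and> \<sigma>p = ((1/l2) * (1/\<mu>1 + 1/\<mu>2)) / (1/\<mu>1 + 1/\<mu>2 - 1/l2))
   \<or> \<comment> \<open>p_5\<close>
     (L1 = PInfty \<and> \<mu>1 > - \<mu>2 \<and> - \<mu>2 > 0 \<and> 0 < 1/\<mu>1 + 1/\<mu>2 + 1/l2 \<and>
       \<sigma> = 0 \<and> \<sigma>p = (\<mu>1 + \<mu>2) / \<mu>2\<^sup>2)
   \<or> \<comment> \<open>p_6\<close>
     (L2 = PInfty \<and> \<mu>2 > - \<mu>1 \<and> - \<mu>1 > 0 \<and> 0 < 1/\<mu>1 + 1/\<mu>2 + 1/l1 \<and>
       \<sigma> = (\<mu>1 + \<mu>2) / \<mu>1\<^sup>2 \<and> \<sigma>p = 0))"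

end

theory Submission
  imports Defs
begin

text \<open>A function of the class F(\<mu>, L) satisfies, between any two points, an interpolation
  inequality: a lower quadratic bound sharpened by the squared deviation of the subgradients
  from those of \<mu>/2 |.|^2, weighted by 1/(2(L - \<mu>)). One DCA step makes the subgradient
  selected for f2 at x a subgradient of f1 at x+, so the interpolation inequalities of f1 and
  of f2 between x and x+ can be summed with nonnegative multipliers; in each regime the
  remainder is a nonnegative multiple of a square, which gives the one-step decrease of
  F = f1 - f2. Telescoping it over N steps bounds the smallest subgradient gap, and when
  L1 > \<mu>2 one more step from x^N along -(g1 - g2)/(L1 - \<mu>2) relates F(x^N) to inf F.\<close>

lemma le_of_linear_perturbation:
  fixes a b c :: real
  assumes "\<And>s. 0 < s \<Longrightarrow> s < 1 \<Longrightarrow> b - s * c \<le> a"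
  shows "b \<le> a"
proof (rule tendsto_upperbound)
  show "((\<lambda>s. b - s * c) \<longlongrightarrow> b) (at_right 0)"
    by (auto intro!: tendsto_eq_intros)
  show "\<forall>\<^sub>F s in at_right 0. b - s * c \<le> a"
    unfolding eventually_at_right_field using assms by (auto intro!: exI[of _ 1])
qed simp

lemma norm_add_scaleR_square:
  fixes u d :: "'a::real_inner"
  shows "(norm (u + k *\<^sub>R d))\<^sup>2 = (norm u)\<^sup>2 + 2 * k * inner u d + k\<^sup>2 * (norm d)\<^sup>2"
  unfolding power2_norm_eq_inner
  by (simp add: inner_add_left inner_add_right inner_commute power2_eq_square algebra_simps)

lemma half_norm_square_expand:
  fixes x y :: "'a::real_inner"
  shows "c / 2 * (norm y)\<^sup>2 = c / 2 * (norm x)\<^sup>2 + c * inner x (y - x) + c / 2 * (norm (y - x))\<^sup>2"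
  unfolding power2_norm_eq_inner
  by (simp add: inner_diff_left inner_diff_right inner_commute algebra_simps)

lemma convex_on_support_of_quadratic_minorant:
  fixes \<phi> :: "'a::real_inner \<Rightarrow> real"
  assumes cv: "convex_on UNIV \<phi>"
    and lb: "\<And>y. \<phi> x + inner v (y - x) - K * (norm (y - x))\<^sup>2 \<le> \<phi> y"
  shows "\<phi> x + inner v (y - x) \<le> \<phi> y"
proof (rule le_of_linear_perturbation)
  fix s :: real assume s: "0 < s" "s < 1"
  define z where "z = (1 - s) *\<^sub>R x + s *\<^sub>R y"
  have "z - x = s *\<^sub>R (y - x)" by (simp add: z_def algebra_simps)
  then have "\<phi> x + s * inner v (y - x) - K * s\<^sup>2 * (norm (y - x))\<^sup>2 \<le> \<phi> z"
    using lb[of z] by (simp add: power_mult_distrib)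
  also have "\<phi> z \<le> (1 - s) * \<phi> x + s * \<phi> y"
    unfolding z_def using s by (intro convex_onD[OF cv]) auto
  finally have "s * (\<phi> x + inner v (y - x) - s * (K * (norm (y - x))\<^sup>2)) \<le> s * \<phi> y"
    by (simp add: algebra_simps power2_eq_square)
  then show "\<phi> x + inner v (y - x) - s * (K * (norm (y - x))\<^sup>2) \<le> \<phi> y"
    using s by simp
qed

text \<open>Here the convexity inequality is used at the reflected point x - s (y - x),
  so that x lies between it and y.\<close>
lemma convex_on_support_of_quadratic_majorant:
  fixes \<phi> :: "'a::real_inner \<Rightarrow> real"
  assumes cv: "convex_on UNIV \<phi>"
    and ub: "\<And>y. \<phi> y \<le> \<phi> x + inner v (y - x) + K * (norm (y - x))\<^sup>2"
  shows "\<phi> x + inner v (y - x) \<le> \<phi> y"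
proof (rule le_of_linear_perturbation)
  fix s :: real assume s: "0 < s" "s < 1"
  define z where "z = x - s *\<^sub>R (y - x)"
  define t where "t = s / (1 + s)"
  have "(1 + s) *\<^sub>R ((1 - t) *\<^sub>R z + t *\<^sub>R y) = (1 + s) *\<^sub>R x"
    using s by (simp add: t_def z_def algebra_simps divide_simps)
  then have x: "x = (1 - t) *\<^sub>R z + t *\<^sub>R y"
    using s by (metis add_pos_pos less_irrefl scaleR_left_imp_eq zero_less_one)
  have "(1 + s) * \<phi> x \<le> (1 + s) * ((1 - t) * \<phi> z + t * \<phi> y)"
    using s by (subst (1) x, intro mult_left_mono convex_onD[OF cv]) (auto simp: t_def)
  also have "\<dots> = ((1 + s) * (1 - t)) * \<phi> z + ((1 + s) * t) * \<phi> y"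
    by (simp add: algebra_simps)
  also have "(1 + s) * (1 - t) = 1"
    using s by (simp add: t_def field_simps)
  also have "(1 + s) * t = s"
    using s by (simp add: t_def field_simps)
  also have "\<phi> z \<le> \<phi> x - s * inner v (y - x) + K * s\<^sup>2 * (norm (y - x))\<^sup>2"
    using ub[of z] by (simp add: z_def power_mult_distrib)
  finally have "s * (\<phi> x + inner v (y - x) - s * (K * (norm (y - x))\<^sup>2)) \<le> s * \<phi> y"
    by (simp add: algebra_simps power2_eq_square)
  then show "\<phi> x + inner v (y - x) - s * (K * (norm (y - x))\<^sup>2) \<le> \<phi> y"
    using s by simp
qed

lemma fclass_subdiff_lower_bound:
  fixes f :: "'a::euclidean_space \<Rightarrow> real"
  assumes f: "fclass \<mu> L f" and g: "g \<in> subdiff \<mu> f x"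
  shows "f x + inner g (y - x) + \<mu> / 2 * (norm (y - x))\<^sup>2 \<le> f y"
proof -
  have shift: "inner (g - \<mu> *\<^sub>R x) (z - x) = inner g (z - x) - \<mu> * inner x (z - x)" for z
    by (simp add: inner_diff_left)
  have "f x - \<mu> / 2 * (norm x)\<^sup>2 + inner (g - \<mu> *\<^sub>R x) (y - x) \<le> f y - \<mu> / 2 * (norm y)\<^sup>2"
  proof (cases "\<mu> \<ge> 0")
    case True
    have "f x + inner g (z - x) \<le> f z" for z
      using g True by (simp add: subdiff_def csubdiff_def)
    note support = this
    show ?thesis
    proof (rule convex_on_support_of_quadratic_minorant[where K = "\<mu> / 2"])
      show "convex_on UNIV (\<lambda>x. f x - \<mu> / 2 * (norm x)\<^sup>2)" using f by (simp add: fclass_def)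
      show "f x - \<mu> / 2 * (norm x)\<^sup>2 + inner (g - \<mu> *\<^sub>R x) (z - x) - \<mu> / 2 * (norm (z - x))\<^sup>2
          \<le> f z - \<mu> / 2 * (norm z)\<^sup>2" for z
        using support[of z] half_norm_square_expand[of \<mu> z x] shift[of z] by linarith
    qed
  next
    case False
    then show ?thesis using g by (auto simp: subdiff_def csubdiff_def)
  qed
  then show ?thesis using half_norm_square_expand[of \<mu> y x] shift[of y] by linarith
qed

text \<open>The quadratic majorant comes from the lower bound: with g a subgradient of f at x,
  the convex function l/2 |.|^2 - f is dominated by its tangent at x plus (l - \<mu>)/2 |. - x|^2.\<close>
lemma fclass_subdiff_upper_bound:
  fixes f :: "'a::euclidean_space \<Rightarrow> real"
  assumes f: "fclass \<mu> (ereal l) f" and g: "g \<in> subdiff \<mu> f x"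
  shows "f y \<le> f x + inner g (y - x) + l / 2 * (norm (y - x))\<^sup>2"
proof -
  have shift: "inner (l *\<^sub>R x - g) (z - x) = l * inner x (z - x) - inner g (z - x)" for z
    by (simp add: inner_diff_left)
  have split: "(l - \<mu>) / 2 * (norm (z - x))\<^sup>2 = l / 2 * (norm (z - x))\<^sup>2 - \<mu> / 2 * (norm (z - x))\<^sup>2" for z
    by (simp add: field_simps)
  have "l / 2 * (norm x)\<^sup>2 - f x + inner (l *\<^sub>R x - g) (y - x) \<le> l / 2 * (norm y)\<^sup>2 - f y"
  proof (rule convex_on_support_of_quadratic_majorant[where K = "(l - \<mu>) / 2"])
    show "convex_on UNIV (\<lambda>x. l / 2 * (norm x)\<^sup>2 - f x)" using f by (simp add: fclass_def)
    show "l / 2 * (norm z)\<^sup>2 - f z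
        \<le> l / 2 * (norm x)\<^sup>2 - f x + inner (l *\<^sub>R x - g) (z - x) + (l - \<mu>) / 2 * (norm (z - x))\<^sup>2" for z
      using fclass_subdiff_lower_bound[OF f g, of z] half_norm_square_expand[of l z x] shift[of z] split[of z]
      by linarith
  qed
  then show ?thesis using half_norm_square_expand[of l y x] shift[of y] by linarith
qed

lemma fclass_interpolation_finite:
  fixes f :: "'a::euclidean_space \<Rightarrow> real"
  assumes f: "fclass \<mu> (ereal l) f" and \<mu>l: "\<mu> < l"
    and g: "g \<in> subdiff \<mu> f x" and g': "g' \<in> subdiff \<mu> f y"
  shows "f y + inner g' (x - y) + \<mu> / 2 * (norm (x - y))\<^sup>2
      + 1 / (2 * (l - \<mu>)) * (norm (g - g' - \<mu> *\<^sub>R (x - y)))\<^sup>2 \<le> f x"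
proof -
  define e where "e = x - y"
  define v where "v = g' - g + \<mu> *\<^sub>R e"
  define w where "w = (1 / (l - \<mu>)) *\<^sub>R v"
  have up: "f (x + w) \<le> f x + inner g w + l / 2 * (norm w)\<^sup>2"
    using fclass_subdiff_upper_bound[OF f g, of "x + w"] by simp
  have lo: "f y + inner g' (e + w) + \<mu> / 2 * (norm (e + w))\<^sup>2 \<le> f (x + w)"
    using fclass_subdiff_lower_bound[OF f g', of "x + w"] by (simp add: e_def algebra_simps)
  have vw: "inner v w = (norm v)\<^sup>2 / (l - \<mu>)"
    by (simp add: w_def power2_norm_eq_inner)
  have ww: "(norm w)\<^sup>2 = (norm v)\<^sup>2 / (l - \<mu>)\<^sup>2"
    by (simp add: w_def power_divide)
  have "inner v w - (l - \<mu>) / 2 * (norm w)\<^sup>2 = (norm v)\<^sup>2 / (2 * (l - \<mu>))"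
  proof -
    have "N / D - D / 2 * (N / D\<^sup>2) = N / (2 * D)" if "D \<noteq> 0" for N D :: real
      using that by (simp add: field_simps power2_eq_square)
    then show ?thesis unfolding vw ww using \<mu>l by simp
  qed
  moreover have "inner g' (e + w) + \<mu> / 2 * (norm (e + w))\<^sup>2
      = inner g' e + \<mu> / 2 * (norm e)\<^sup>2 + inner g w + l / 2 * (norm w)\<^sup>2
        + (inner v w - (l - \<mu>) / 2 * (norm w)\<^sup>2)"
    using norm_add_scaleR_square[of e 1 w]
    by (simp add: v_def inner_add_left inner_add_right inner_diff_left field_simps)
  moreover have "norm (g - g' - \<mu> *\<^sub>R (x - y)) = norm v"
    using norm_minus_cancel[of v] by (simp add: v_def e_def algebra_simps)
  ultimately show ?thesis using up lo by (simp add: e_def)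
qed

definition interp_weight :: "real \<Rightarrow> ereal \<Rightarrow> real" where
  "interp_weight \<mu> L = (if L = PInfty then 0 else 1 / (2 * (real_of_ereal L - \<mu>)))"

lemma fclass_interpolation:
  fixes f :: "'a::euclidean_space \<Rightarrow> real"
  assumes f: "fclass \<mu> L f" and \<mu>L: "ereal \<mu> < L"
    and g: "g \<in> subdiff \<mu> f x" and g': "g' \<in> subdiff \<mu> f y"
  shows "f y + inner g' (x - y) + \<mu> / 2 * (norm (x - y))\<^sup>2
      + interp_weight \<mu> L * (norm (g - g' - \<mu> *\<^sub>R (x - y)))\<^sup>2 \<le> f x"
proof (cases L)
  case (real l)
  then show ?thesis
    using fclass_interpolation_finite[of \<mu> l f g x g' y] assms by (simp add: interp_weight_def)
qed (use assms fclass_subdiff_lower_bound in \<open>auto simp: interp_weight_def\<close>)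

lemma fclass_subdiff_monotone:
  fixes f :: "'a::euclidean_space \<Rightarrow> real"
  assumes f: "fclass \<mu> L f" and \<mu>L: "ereal \<mu> < L"
    and g: "g \<in> subdiff \<mu> f x" and g': "g' \<in> subdiff \<mu> f y"
  shows "2 * interp_weight \<mu> L * (norm (g' - g - \<mu> *\<^sub>R (y - x)))\<^sup>2
      \<le> inner (g' - g - \<mu> *\<^sub>R (y - x)) (y - x)"
proof -
  define u where "u = g' - g - \<mu> *\<^sub>R (y - x)"
  have "norm (g - g' - \<mu> *\<^sub>R (x - y)) = norm u"
    using norm_minus_cancel[of u] by (simp add: u_def algebra_simps)
  then have "f y + inner g' (x - y) + \<mu> / 2 * (norm (y - x))\<^sup>2 + interp_weight \<mu> L * (norm u)\<^sup>2 \<le> f x"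
    and "f x + inner g (y - x) + \<mu> / 2 * (norm (y - x))\<^sup>2 + interp_weight \<mu> L * (norm u)\<^sup>2 \<le> f y"
    using fclass_interpolation[OF f \<mu>L g g'] fclass_interpolation[OF f \<mu>L g' g]
    by (simp_all add: norm_minus_commute u_def)
  moreover have "inner u (y - x) = inner g' (y - x) - inner g (y - x) - \<mu> * (norm (y - x))\<^sup>2"
    by (simp add: u_def inner_diff_left power2_norm_eq_inner)
  moreover have "inner g' (x - y) = - inner g' (y - x)"
    by (simp add: inner_diff_right)
  ultimately show ?thesis unfolding u_def[symmetric] by linarith
qed

lemma dca_argmin_subdiff:
  fixes f :: "'a::real_inner \<Rightarrow> real"
  assumes "dca_argmin f g y"
  shows "g \<in> subdiff \<mu> f y"
proof (cases "\<mu> \<ge> 0")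
  case True
  then show ?thesis
    using assms by (auto simp: subdiff_def csubdiff_def dca_argmin_def inner_diff_right algebra_simps)
next
  case False
  have "f y - \<mu> / 2 * (norm y)\<^sup>2 + inner (g - \<mu> *\<^sub>R y) (w - y) \<le> f w - \<mu> / 2 * (norm w)\<^sup>2" for w
  proof -
    have "f y - inner g y \<le> f w - inner g w" using assms by (simp add: dca_argmin_def)
    moreover have "0 \<le> - \<mu> / 2 * (norm (w - y))\<^sup>2" using False by (intro mult_nonneg_nonneg) auto
    moreover have "inner (g - \<mu> *\<^sub>R y) (w - y) = inner g w - inner g y - \<mu> * inner y (w - y)"
      by (simp add: inner_diff_left inner_diff_right algebra_simps)
    ultimately show ?thesis
      using half_norm_square_expand[of \<mu> w y] by linarith
  qed
  then have "g - \<mu> *\<^sub>R y \<in> csubdiff (\<lambda>y. f y - \<mu> / 2 * (norm y)\<^sup>2) y"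
    by (simp add: csubdiff_def)
  then show ?thesis using False unfolding subdiff_def by force
qed

text \<open>The four interpolation inequalities between x, x' for f1 (subgradients a, b) and for
  f2 (subgradients b, c) are combined with multipliers 1, s and 1, t; b is shared because the
  DCA step makes the selected subgradient of f2 at x a subgradient of f1 at x'.\<close>
lemma dca_step_bound:
  fixes f1 f2 :: "'a::euclidean_space \<Rightarrow> real"
  assumes f1: "fclass \<mu>1 L1 f1" and f2: "fclass \<mu>2 L2 f2"
    and \<mu>L1: "ereal \<mu>1 < L1" and \<mu>L2: "ereal \<mu>2 < L2"
    and a: "a \<in> subdiff \<mu>1 f1 x" and b1: "b \<in> subdiff \<mu>1 f1 x'"
    and b2: "b \<in> subdiff \<mu>2 f2 x" and c: "c \<in> subdiff \<mu>2 f2 x'"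
    and s: "0 \<le> s" and t: "0 \<le> t"
  defines "d \<equiv> x' - x" and "u1 \<equiv> b - a - \<mu>1 *\<^sub>R (x' - x)" and "u2 \<equiv> c - b - \<mu>2 *\<^sub>R (x' - x)"
  shows "(\<mu>1 + \<mu>2) / 2 * (norm d)\<^sup>2 - s * inner u1 d - t * inner u2 d
      + (1 + 2 * s) * interp_weight \<mu>1 L1 * (norm u1)\<^sup>2 + (1 + 2 * t) * interp_weight \<mu>2 L2 * (norm u2)\<^sup>2
      \<le> (f1 x - f2 x) - (f1 x' - f2 x')"
proof -
  define w1 where "w1 = interp_weight \<mu>1 L1"
  define w2 where "w2 = interp_weight \<mu>2 L2"
  have "norm (a - b - \<mu>1 *\<^sub>R (x - x')) = norm u1"
    using norm_minus_cancel[of u1] by (simp add: u1_def d_def algebra_simps)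
  then have I1: "f1 x' - inner b d + \<mu>1 / 2 * (norm d)\<^sup>2 + w1 * (norm u1)\<^sup>2 \<le> f1 x"
    using fclass_interpolation[OF f1 \<mu>L1 a b1]
    by (simp add: w1_def d_def norm_minus_commute inner_diff_right)
  have I2: "f2 x + inner b d + \<mu>2 / 2 * (norm d)\<^sup>2 + w2 * (norm u2)\<^sup>2 \<le> f2 x'"
    using fclass_interpolation[OF f2 \<mu>L2 c b2] by (simp add: w2_def d_def u2_def)
  have "0 \<le> s * (inner u1 d - 2 * w1 * (norm u1)\<^sup>2)"
    using fclass_subdiff_monotone[OF f1 \<mu>L1 a b1] s by (simp add: w1_def u1_def d_def)
  moreover have "0 \<le> t * (inner u2 d - 2 * w2 * (norm u2)\<^sup>2)"
    using fclass_subdiff_monotone[OF f2 \<mu>L2 b2 c] t by (simp add: w2_def u2_def d_def)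
  ultimately show ?thesis
    using I1 I2 unfolding w1_def[symmetric] w2_def[symmetric] by (simp add: algebra_simps add_divide_distrib)
qed

text \<open>Certificates for the regimes: ma and l are the parameters of the component whose L is
  finite, mb the strong convexity parameter of the other one, t the multiplier of its
  monotonicity inequality in the combination above, and c the resulting rate.\<close>
definition descent_certificate :: "real \<Rightarrow> real \<Rightarrow> real \<Rightarrow> real \<Rightarrow> real \<Rightarrow> bool" where
  "descent_certificate ma mb l t c \<longleftrightarrow> ma < l \<and>
     ((0 < l \<and> 0 \<le> mb \<and> 0 \<le> ma * l + mb * l + ma * mb \<and> t = mb / l \<and> c = (l + mb) / l\<^sup>2)
    \<or> (0 < ma \<and> mb < 0 \<and> 0 < ma + mb \<and> t = 0 \<and> c = (ma + mb) / (l * (ma + mb) - ma * mb))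
    \<or> (0 < l \<and> ma < 0 \<and> 0 < ma + mb \<and> ma * mb + (ma + mb) * l < 0
        \<and> t = - (ma + mb) / ma \<and> c = (ma + mb) / ma\<^sup>2))"

lemma descent_certificate_nonneg:
  assumes "descent_certificate ma mb l t c"
  shows "0 \<le> t"
  using assms by (auto simp: descent_certificate_def divide_nonpos_neg)

lemma norm_scaleR_diff_square_nonneg:
  fixes u d :: "'a::real_inner"
  shows "0 \<le> a\<^sup>2 * (norm u)\<^sup>2 - 2 * a * b * inner u d + b\<^sup>2 * (norm d)\<^sup>2"
proof -
  have "(norm (a *\<^sub>R u - b *\<^sub>R d))\<^sup>2 = a\<^sup>2 * (norm u)\<^sup>2 - 2 * a * b * inner u d + b\<^sup>2 * (norm d)\<^sup>2"
    unfolding power2_norm_eq_inner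
    by (simp add: inner_diff_left inner_diff_right inner_commute power2_eq_square algebra_simps)
  then show ?thesis by (metis zero_le_power2)
qed

text \<open>In each case the gap between the two sides is a nonnegative multiple of a square.\<close>
lemma descent_certificate_bound:
  fixes u d :: "'a::real_inner"
  assumes cert: "descent_certificate ma mb l t c"
  shows "c / 2 * (norm (u + ma *\<^sub>R d))\<^sup>2
      \<le> (ma + mb) / 2 * (norm d)\<^sup>2 - t * inner u d + (1 + 2 * t) / (2 * (l - ma)) * (norm u)\<^sup>2"
proof -
  define U D p where "U = (norm u)\<^sup>2" and "D = (norm d)\<^sup>2" and "p = inner u d"
  define gap where "gap = (ma + mb) / 2 * D - t * p + (1 + 2 * t) / (2 * (l - ma)) * U
      - c / 2 * (U + 2 * ma * p + ma\<^sup>2 * D)"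
  have sq: "0 \<le> a\<^sup>2 * U - 2 * a * b * p + b\<^sup>2 * D" for a b
    using norm_scaleR_diff_square_nonneg[of a u b d] by (simp add: U_def D_def p_def)
  have lma: "ma < l" using cert by (simp add: descent_certificate_def)
  have "0 \<le> gap"
    using cert unfolding descent_certificate_def
  proof (elim conjE disjE)
    assume l: "0 < l" and cond: "0 \<le> ma * l + mb * l + ma * mb" and tc: "t = mb / l" "c = (l + mb) / l\<^sup>2"
    have "gap = (ma * l + mb * l + ma * mb) / (2 * l\<^sup>2 * (l - ma)) * (1\<^sup>2 * U - 2 * 1 * (l - ma) * p + (l - ma)\<^sup>2 * D)"
      using l lma by (simp add: gap_def tc field_simps power2_eq_square)
    moreover have "0 \<le> (ma * l + mb * l + ma * mb) / (2 * l\<^sup>2 * (l - ma))"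
      using l cond lma by simp
    ultimately show ?thesis using sq[of 1 "l - ma"] by (metis mult_nonneg_nonneg)
  next
    assume m: "0 < ma" "mb < 0" "0 < ma + mb" and tc: "t = 0" "c = (ma + mb) / (l * (ma + mb) - ma * mb)"
    define E where "E = l * (ma + mb) - ma * mb"
    have "0 < l * (ma + mb)" using m lma by simp
    moreover have "ma * mb < 0" using m by (simp add: mult_pos_neg)
    ultimately have E: "0 < E" by (simp add: E_def)
    have "gap = (ma\<^sup>2 * U - 2 * ma * ((ma + mb) * (l - ma)) * p + ((ma + mb) * (l - ma))\<^sup>2 * D)
        / (2 * (l - ma) * E)"
      using E lma unfolding gap_def tc E_def[symmetric]
      by (simp add: field_simps power2_eq_square) (simp add: E_def algebra_simps)
    then show ?thesis using sq E lma by simp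
  next
    assume "ma < 0" and cond: "ma * mb + (ma + mb) * l < 0"
      and tc: "t = - (ma + mb) / ma" "c = (ma + mb) / ma\<^sup>2"
    then have "gap = - (ma * mb + (ma + mb) * l) / (2 * ma\<^sup>2 * (l - ma)) * U"
      using lma by (simp add: gap_def tc field_simps power2_eq_square)
    then show ?thesis using cond lma by (simp add: U_def)
  qed
  then show ?thesis
    by (simp add: gap_def U_def D_def p_def norm_add_scaleR_square algebra_simps)
qed

lemma inverse_sum_nonpos_iff:
  fixes a b l :: real
  assumes "a * b * l < 0"
  shows "1 / a + 1 / b + 1 / l \<le> 0 \<longleftrightarrow> 0 \<le> a * l + b * l + a * b"
proof -
  have "a * b * l * (1 / a + 1 / b + 1 / l) = a * l + b * l + a * b"
    using assms by (auto simp: field_simps)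
  then show ?thesis
    using assms by (metis mult_le_0_iff not_less order_le_less zero_le_mult_iff)
qed

lemma descent_certificate_of_regime:
  fixes ma mb l c :: real
  assumes l: "0 < l" "ma < l" and m: "0 < ma + mb \<or> (ma = 0 \<and> mb = 0)"
    and regime:
      "(0 \<le> mb \<and> (0 \<le> ma \<or> (ma < 0 \<and> 1 / ma + 1 / mb + 1 / l \<le> 0)) \<and> c = (l + mb) / l\<^sup>2)
     \<or> (- mb < ma \<and> 0 < - mb \<and> c = ((1 / l) * (1 / ma + 1 / mb)) / (1 / ma + 1 / mb - 1 / l))
     \<or> (- ma < mb \<and> 0 < - ma \<and> 0 < 1 / ma + 1 / mb + 1 / l \<and> c = (ma + mb) / ma\<^sup>2)"
  shows "\<exists>t. descent_certificate ma mb l t c"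
  using regime
proof (elim disjE[of "_ \<and> _"] conjE)
  assume mb: "0 \<le> mb" and ma: "0 \<le> ma \<or> (ma < 0 \<and> 1 / ma + 1 / mb + 1 / l \<le> 0)"
    and c: "c = (l + mb) / l\<^sup>2"
  have "0 \<le> ma * l + mb * l + ma * mb"
    using ma
  proof (elim disjE conjE)
    assume "0 \<le> ma" then show ?thesis using l mb by simp
  next
    assume "ma < 0" "1 / ma + 1 / mb + 1 / l \<le> 0"
    moreover have "ma * mb * l < 0"
      using \<open>ma < 0\<close> m mb l by (simp add: mult_neg_pos)
    ultimately show ?thesis using inverse_sum_nonpos_iff by blast
  qed
  then show ?thesis using l mb c unfolding descent_certificate_def by blast
next
  assume m': "- mb < ma" "0 < - mb" and c: "c = ((1 / l) * (1 / ma + 1 / mb)) / (1 / ma + 1 / mb - 1 / l)"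
  have "c = (ma + mb) / (l * (ma + mb) - ma * mb)"
  proof -
    have "ma \<noteq> 0" "mb \<noteq> 0" "l \<noteq> 0" using m' l by auto
    then have "(1 / l) * (1 / ma + 1 / mb) = (ma + mb) / (ma * mb * l)"
      and "1 / ma + 1 / mb - 1 / l = (l * (ma + mb) - ma * mb) / (ma * mb * l)"
      by (simp_all add: field_simps)
    then show ?thesis using \<open>ma \<noteq> 0\<close> \<open>mb \<noteq> 0\<close> \<open>l \<noteq> 0\<close> by (simp add: c)
  qed
  then show ?thesis using l m' unfolding descent_certificate_def by auto
next
  assume m': "- ma < mb" "0 < - ma" "0 < 1 / ma + 1 / mb + 1 / l" and c: "c = (ma + mb) / ma\<^sup>2"
  have "ma * mb * l < 0"
    using m' l by (simp add: mult_neg_pos)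
  then have "ma * mb + (ma + mb) * l < 0"
    using inverse_sum_nonpos_iff[of ma mb l] m' by (simp add: algebra_simps)
  then show ?thesis using l m' c unfolding descent_certificate_def by auto
qed

lemma dca_regime_certificate:
  assumes mu: "\<mu>1 + \<mu>2 > 0 \<or> (\<mu>1 = 0 \<and> \<mu>2 = 0)"
    and Lpos: "L1 > 0" "L2 > 0"
    and Linf: "(L1 = PInfty \<and> L2 \<noteq> PInfty) \<or> (L2 = PInfty \<and> L1 \<noteq> PInfty)"
    and \<mu>L: "ereal \<mu>1 < L1" "ereal \<mu>2 < L2"
    and regime: "dca_regime \<mu>1 \<mu>2 L1 L2 \<sigma> \<sigma>p"
  shows "(L1 = PInfty \<and> L2 \<noteq> PInfty \<and> \<sigma> = 0
          \<and> (\<exists>t. descent_certificate \<mu>2 \<mu>1 (real_of_ereal L2) t \<sigma>p))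
       \<or> (L2 = PInfty \<and> L1 \<noteq> PInfty \<and> \<sigma>p = 0
          \<and> (\<exists>s. descent_certificate \<mu>1 \<mu>2 (real_of_ereal L1) s \<sigma>))"
proof -
  define l1 l2 where "l1 = real_of_ereal L1" and "l2 = real_of_ereal L2"
  have finite: "0 < real_of_ereal L \<and> \<mu> < real_of_ereal L"
    if "L \<noteq> PInfty" "0 < L" "ereal \<mu> < L" for L \<mu>
    using that by (cases L) auto
  have mu': "0 < \<mu>2 + \<mu>1 \<or> (\<mu>2 = 0 \<and> \<mu>1 = 0)" using mu by auto
  show ?thesis
    using regime Linf unfolding dca_regime_def Let_def l1_def[symmetric] l2_def[symmetric]
    by (elim disjE[of "_ \<and> _"] conjE)
       (use finite[OF _ Lpos(1) \<mu>L(1)] finite[OF _ Lpos(2) \<mu>L(2)]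
          descent_certificate_of_regime[of l1 \<mu>1 \<mu>2 \<sigma>, OF _ _ mu]
          descent_certificate_of_regime[of l2 \<mu>2 \<mu>1 \<sigma>p, OF _ _ mu']
        in \<open>simp_all add: l1_def l2_def ac_simps\<close>)
qed

lemma dca_one_step_descent:
  fixes f1 f2 :: "'a::euclidean_space \<Rightarrow> real"
  assumes mu: "\<mu>1 + \<mu>2 > 0 \<or> (\<mu>1 = 0 \<and> \<mu>2 = 0)"
    and Lpos: "L1 > 0" "L2 > 0"
    and Linf: "(L1 = PInfty \<and> L2 \<noteq> PInfty) \<or> (L2 = PInfty \<and> L1 \<noteq> PInfty)"
    and \<mu>L: "ereal \<mu>1 < L1" "ereal \<mu>2 < L2"
    and f1: "fclass \<mu>1 L1 f1" and f2: "fclass \<mu>2 L2 f2"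
    and regime: "dca_regime \<mu>1 \<mu>2 L1 L2 \<sigma> \<sigma>p"
    and h1: "h1 \<in> subdiff \<mu>1 f1 y" and h2: "h2 \<in> subdiff \<mu>2 f2 y"
    and step: "dca_argmin f1 h2 y'" and h2': "h2' \<in> subdiff \<mu>2 f2 y'"
  shows "\<sigma> / 2 * (norm (h1 - h2))\<^sup>2 + \<sigma>p / 2 * (norm (h2 - h2'))\<^sup>2 \<le> (f1 y - f2 y) - (f1 y' - f2 y')"
proof -
  define d where "d = y' - y"
  define u1 where "u1 = h2 - h1 - \<mu>1 *\<^sub>R d"
  define u2 where "u2 = h2' - h2 - \<mu>2 *\<^sub>R d"
  have bound: "(\<mu>1 + \<mu>2) / 2 * (norm d)\<^sup>2 - s * inner u1 d - t * inner u2 d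
      + (1 + 2 * s) * interp_weight \<mu>1 L1 * (norm u1)\<^sup>2 + (1 + 2 * t) * interp_weight \<mu>2 L2 * (norm u2)\<^sup>2
      \<le> (f1 y - f2 y) - (f1 y' - f2 y')" if "0 \<le> s" "0 \<le> t" for s t
    using dca_step_bound[OF f1 f2 \<mu>L h1 dca_argmin_subdiff[OF step] h2 h2' that]
    unfolding d_def u1_def u2_def .
  have n1: "norm (h1 - h2) = norm (u1 + \<mu>1 *\<^sub>R d)" and n2: "norm (h2 - h2') = norm (u2 + \<mu>2 *\<^sub>R d)"
    by (simp_all add: u1_def u2_def norm_minus_commute)
  from dca_regime_certificate[OF mu Lpos Linf \<mu>L regime] show ?thesis
  proof (elim disjE conjE exE)
    fix t assume L: "L1 = PInfty" "L2 \<noteq> PInfty" and "\<sigma> = 0"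
      and cert: "descent_certificate \<mu>2 \<mu>1 (real_of_ereal L2) t \<sigma>p"
    have "(1 + 2 * t) * interp_weight \<mu>2 L2 * (norm u2)\<^sup>2
        = (1 + 2 * t) / (2 * (real_of_ereal L2 - \<mu>2)) * (norm u2)\<^sup>2"
      using L by (simp add: interp_weight_def)
    then show ?thesis
      using bound[OF order_refl descent_certificate_nonneg[OF cert]]
        descent_certificate_bound[OF cert, of u2 d] L \<open>\<sigma> = 0\<close>
      unfolding n2 by (simp add: interp_weight_def algebra_simps)
  next
    fix s assume L: "L2 = PInfty" "L1 \<noteq> PInfty" and "\<sigma>p = 0"
      and cert: "descent_certificate \<mu>1 \<mu>2 (real_of_ereal L1) s \<sigma>"
    have "(1 + 2 * s) * interp_weight \<mu>1 L1 * (norm u1)\<^sup>2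
        = (1 + 2 * s) / (2 * (real_of_ereal L1 - \<mu>1)) * (norm u1)\<^sup>2"
      using L by (simp add: interp_weight_def)
    then show ?thesis
      using bound[OF descent_certificate_nonneg[OF cert] order_refl]
        descent_certificate_bound[OF cert, of u1 d] L \<open>\<sigma>p = 0\<close>
      unfolding n1 by (simp add: interp_weight_def algebra_simps)
  qed
qed

lemma telescoping_min_bound:
  fixes a m :: "nat \<Rightarrow> real"
  assumes \<sigma>: "0 \<le> \<sigma>" "0 \<le> \<sigma>p"
    and descent: "\<And>k. k < N \<Longrightarrow> \<sigma> / 2 * m k + \<sigma>p / 2 * m (Suc k) \<le> a k - a (Suc k)"
  shows "(\<sigma> + \<sigma>p) / 2 * real N * Min (m ` {0..N}) \<le> a 0 - a N"
proof -
  define M where "M = Min (m ` {0..N})"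
  have M: "M \<le> m k" if "k \<le> N" for k
    using that by (simp add: M_def)
  have "(\<sigma> + \<sigma>p) / 2 * M \<le> a k - a (Suc k)" if "k < N" for k
  proof -
    have "\<sigma> / 2 * M \<le> \<sigma> / 2 * m k" and "\<sigma>p / 2 * M \<le> \<sigma>p / 2 * m (Suc k)"
      using M[of k] M[of "Suc k"] that \<sigma> by (simp_all add: mult_left_mono)
    then show ?thesis using descent[OF that] by (simp add: distrib_right)
  qed
  then have "(\<Sum>k<N. (\<sigma> + \<sigma>p) / 2 * M) \<le> (\<Sum>k<N. a k - a (Suc k))"
    by (intro sum_mono) simp
  also have "\<dots> = a 0 - a N"
    by (rule sum_lessThan_telescope')
  finally show ?thesis by (simp add: M_def mult.commute mult.left_commute)
qed

text \<open>The point x - (g1 - g2)/(L1 - \<mu>2) gains this much on F = f1 - f2, by the quadratic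
  upper bound for f1 and the lower bound for f2.\<close>
lemma dc_gap_above_infimum:
  fixes f1 f2 :: "'a::euclidean_space \<Rightarrow> real"
  assumes f1: "fclass \<mu>1 L1 f1" and f2: "fclass \<mu>2 L2 f2" and L1: "ereal \<mu>2 < L1"
    and g1: "g1 \<in> subdiff \<mu>1 f1 x" and g2: "g2 \<in> subdiff \<mu>2 f2 x"
    and bdd: "bdd_below (range (\<lambda>y. f1 y - f2 y))"
  shows "(if L1 = PInfty then 0 else 1 / (real_of_ereal L1 - \<mu>2)) / 2 * (norm (g1 - g2))\<^sup>2
      \<le> (f1 x - f2 x) - (INF y. f1 y - f2 y)"
proof -
  have inf: "(INF y. f1 y - f2 y) \<le> f1 y - f2 y" for y
    using bdd by (intro cINF_lower) auto
  show ?thesis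
  proof (cases L1)
    case (real l)
    define v where "v = g1 - g2"
    define w where "w = (- 1 / (l - \<mu>2)) *\<^sub>R v"
    have l: "0 < l - \<mu>2" using L1 real by simp
    have "f1 (x + w) \<le> f1 x + inner g1 w + l / 2 * (norm w)\<^sup>2"
      using fclass_subdiff_upper_bound[of \<mu>1 l f1 g1 x "x + w"] f1 g1 real by simp
    moreover have "f2 x + inner g2 w + \<mu>2 / 2 * (norm w)\<^sup>2 \<le> f2 (x + w)"
      using fclass_subdiff_lower_bound[OF f2 g2, of "x + w"] by simp
    moreover have "inner g1 w - inner g2 w + (l - \<mu>2) / 2 * (norm w)\<^sup>2 = - (norm v)\<^sup>2 / (2 * (l - \<mu>2))"
    proof -
      have "inner g1 w - inner g2 w = - (norm v)\<^sup>2 / (l - \<mu>2)"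
        by (simp add: w_def v_def inner_diff_left power2_norm_eq_inner diff_divide_distrib)
      moreover have "(norm w)\<^sup>2 = (norm v)\<^sup>2 / (l - \<mu>2)\<^sup>2"
        by (simp add: w_def power_divide)
      moreover have "- N / D + D / 2 * (N / D\<^sup>2) = - N / (2 * D)" if "D \<noteq> 0" for N D :: real
        using that by (simp add: field_simps power2_eq_square)
      ultimately show ?thesis using l by simp
    qed
    moreover have "(l - \<mu>2) / 2 * (norm w)\<^sup>2 = l / 2 * (norm w)\<^sup>2 - \<mu>2 / 2 * (norm w)\<^sup>2"
      by (simp add: field_simps)
    moreover have "(if L1 = PInfty then 0 else 1 / (real_of_ereal L1 - \<mu>2)) / 2 * (norm (g1 - g2))\<^sup>2
        = (norm v)\<^sup>2 / (2 * (l - \<mu>2))"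
      using real by (simp add: v_def)
    ultimately show ?thesis
      using inf[of "x + w"] by linarith
  qed (use inf L1 in simp_all)
qed

lemma dca_iterates_subdiff:
  fixes f1 f2 :: "'a::real_inner \<Rightarrow> real"
  assumes g2sel: "\<forall>k<N. g2 k \<in> subdiff \<mu>2 f2 (x k)"
    and step: "\<forall>k<N. dca_argmin f1 (g2 k) (x (Suc k))"
    and g1def: "\<forall>k<N. g1 (Suc k) = g2 k"
    and g10: "g1 0 \<in> subdiff \<mu>1 f1 (x 0)" and g2N: "g2 N \<in> subdiff \<mu>2 f2 (x N)"
    and k: "k \<le> N"
  shows "g1 k \<in> subdiff \<mu>1 f1 (x k)" and "g2 k \<in> subdiff \<mu>2 f2 (x k)"
proof -
  show "g1 k \<in> subdiff \<mu>1 f1 (x k)"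
  proof (cases k)
    case (Suc j)
    then show ?thesis using g1def step k by (auto intro: dca_argmin_subdiff)
  qed (use g10 in simp)
  show "g2 k \<in> subdiff \<mu>2 f2 (x k)"
    using g2sel g2N k by (cases "k = N") auto
qed

theorem mainTheorem5:
  fixes \<mu>1 \<mu>2 :: real and L1 L2 :: ereal
    and f1 f2 :: "'a::euclidean_space \<Rightarrow> real"
    and N :: nat and x g1 g2 :: "nat \<Rightarrow> 'a" and \<sigma> \<sigma>p :: real
  assumes mu: "\<mu>1 + \<mu>2 > 0 \<or> (\<mu>1 = 0 \<and> \<mu>2 = 0)"
    and Lpos: "L1 > 0" "L2 > 0"
    and Linf: "(L1 = PInfty \<and> L2 \<noteq> PInfty) \<or> (L2 = PInfty \<and> L1 \<noteq> PInfty)"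
    and muL: "ereal \<mu>1 < L1" "ereal \<mu>2 < L2"
    and f1: "fclass \<mu>1 L1 f1" and f2: "fclass \<mu>2 L2 f2"
    and bdd: "bdd_below (range (\<lambda>y. f1 y - f2 y))"
    and N: "N \<ge> 1"
    and g2sel: "\<forall>k<N. g2 k \<in> subdiff \<mu>2 f2 (x k)"
    and step: "\<forall>k<N. dca_argmin f1 (g2 k) (x (Suc k))"
    and g1def: "\<forall>k<N. g1 (Suc k) = g2 k"
    and g10: "g1 0 \<in> subdiff \<mu>1 f1 (x 0)"
    and g2N: "g2 N \<in> subdiff \<mu>2 f2 (x N)"
    and regime: "dca_regime \<mu>1 \<mu>2 L1 L2 \<sigma> \<sigma>p"
    and ppos: "\<sigma> + \<sigma>p > 0"
  shows
    "(\<forall>y y' h1 h2 h2'. h1 \<in> subdiff \<mu>1 f1 y \<longrightarrow> h2 \<in> subdiff \<mu>2 f2 y \<longrightarrow>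
        dca_argmin f1 h2 y' \<longrightarrow> h2' \<in> subdiff \<mu>2 f2 y' \<longrightarrow>
        (f1 y - f2 y) - (f1 y' - f2 y') \<ge>
          \<sigma> / 2 * (norm (h1 - h2))\<^sup>2 + \<sigma>p / 2 * (norm (h2 - h2'))\<^sup>2)
   \<and> (1/2) * Min ((\<lambda>k. (norm (g1 k - g2 k))\<^sup>2) ` {0..N})
        \<le> ((f1 (x 0) - f2 (x 0)) - (f1 (x N) - f2 (x N))) / ((\<sigma> + \<sigma>p) * real N)
   \<and> (L1 > ereal \<mu>2 \<longrightarrow>
        (1/2) * Min ((\<lambda>k. (norm (g1 k - g2 k))\<^sup>2) ` {0..N})
        \<le> ((f1 (x 0) - f2 (x 0)) - (INF y. f1 y - f2 y))
           / ((\<sigma> + \<sigma>p) * real N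
              + (if L1 = PInfty then 0 else 1 / (real_of_ereal L1 - \<mu>2))))"
proof -
  define F where "F = (\<lambda>y. f1 y - f2 y)"
  define m where "m = (\<lambda>k. (norm (g1 k - g2 k))\<^sup>2)"
  define M where "M = Min (m ` {0..N})"
  define c where "c = (if L1 = PInfty then 0 else 1 / (real_of_ereal L1 - \<mu>2))"
  note one_step = dca_one_step_descent[OF mu Lpos Linf muL f1 f2 regime]
  note subgrads = dca_iterates_subdiff[OF g2sel step g1def g10 g2N]
  have "\<sigma> = 0 \<or> \<sigma>p = 0"
    using dca_regime_certificate[OF mu Lpos Linf muL regime] by blast
  then have \<sigma>: "0 \<le> \<sigma>" "0 \<le> \<sigma>p" using ppos by auto
  have "\<sigma> / 2 * m k + \<sigma>p / 2 * m (Suc k) \<le> F (x k) - F (x (Suc k))" if "k < N" for k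
    using one_step[OF subgrads(1,2)[of k] _ subgrads(2)[of "Suc k"]] step g1def that
    by (simp add: F_def m_def)
  from telescoping_min_bound[where a = "\<lambda>k. F (x k)", OF \<sigma> this]
  have descent: "(\<sigma> + \<sigma>p) * real N * (M / 2) \<le> F (x 0) - F (x N)"
    by (simp add: M_def)
  have pN: "0 < (\<sigma> + \<sigma>p) * real N" using ppos N by simp
  have c: "0 \<le> c" if "ereal \<mu>2 < L1"
    using that by (cases L1) (auto simp: c_def)
  have "c / 2 * M \<le> F (x N) - (INF y. F y)" if "ereal \<mu>2 < L1"
  proof -
    have "c / 2 * M \<le> c / 2 * m N" using c[OF that] by (simp add: M_def mult_left_mono)
    then show ?thesis
      using dc_gap_above_infimum[OF f1 f2 that subgrads[of N] bdd] by (simp add: F_def m_def c_def)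
  qed
  then have "(1/2) * M \<le> (F (x 0) - (INF y. F y)) / ((\<sigma> + \<sigma>p) * real N + c)" if "ereal \<mu>2 < L1"
    using that descent pN c by (simp add: add_pos_nonneg pos_le_divide_eq algebra_simps)
  moreover have "(1/2) * M \<le> (F (x 0) - F (x N)) / ((\<sigma> + \<sigma>p) * real N)"
    using descent pN by (simp add: pos_le_divide_eq algebra_simps)
  ultimately show ?thesis
    using one_step unfolding F_def m_def M_def c_def by blast
qed

end
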